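(* Let $\varphi$ be an own-peak-only rule on $\mathcal{E}_{\mathcal{SP}}$. If $\varphi$ is envy-free, or if $\varphi$ satisfies the equal division lower bound, then $\varphi$ meets the equal division guarantee.
   Context: Let $N=\{1,\dots,n\}$ be a finite set of agents. A preference $R_i$ is a continuous complete preorder on $\mathbb{R}_+\cup\{\infty\}$ ($P_i$ strict, $I_i$ indifference); its peak $p(R_i)$ is the set of maximal elements. $R_i$ is single-peaked if $p(R_i)$ is a singleton (identified with its element) and for $x,x'\in\mathbb{R}_+$, $xP_ix'$ whenever $x'<x\le p(R_i)$ or $p(R_i)\le x<x'$; $\mathcal{SP}$ is the set of these. An economy is $(R,\Omega)$, $R\in\mathcal{SP}^n$, $\Omega>0$; $\mathcal{E}_{\mathcal{SP}}$ is the set of economies; a rule is a map $\varphi:\mathcal{E}_{\mathcal{SP}}\to\mathbb{R}^n_+$ with $\sum_j\varphi_j(R,\Omega)=\Omega$. Own-peak-only: $p(R_i')=p(R_i)$ implies $\varphi_i(R,\Omega)=\varphi_i(R_i',R_{-i},\Omega)$. Envy-free: for all economies and $i\ne j$, $\varphi_i(R,\Omega)R_i\varphi_j(R,\Omega)$. Equal division lower bound: for all economies and $i$, $\varphi_i(R,\Omega)R_i\frac{\Omega}{n}$. Equal division guarantee: for all economies and $i$ with $p(R_i)=\Omega/n$, $\varphi_i(R,\Omega)I_i\frac{\Omega}{n}$. *)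

theory Defs
  imports "HOL-Analysis.Analysis" "HOL-Library.Extended_Real"
begin

text \<open>Consumption space R_+ \<union> {\<infinity>}, rendered as the nonnegative extended reals.\<close>
definition cdom :: "ereal set" where
  "cdom = {x. 0 \<le> x}"

type_synonym pref = "ereal \<Rightarrow> ereal \<Rightarrow> bool"  (* R x y : x is at least as good as y *)

definition strict :: "pref \<Rightarrow> ereal \<Rightarrow> ereal \<Rightarrow> bool" where
  "strict R x y \<longleftrightarrow> R x y \<and> \<not> R y x"

definition indiff :: "pref \<Rightarrow> ereal \<Rightarrow> ereal \<Rightarrow> bool" where
  "indiff R x y \<longleftrightarrow> R x y \<and> R y x"

definition is_pref :: "pref \<Rightarrow> bool" where
  "is_pref R \<longleftrightarrow>
     (\<forall>x\<in>cdom. R x x) \<and>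
     (\<forall>x\<in>cdom. \<forall>y\<in>cdom. \<forall>z\<in>cdom. R x y \<and> R y z \<longrightarrow> R x z) \<and>
     (\<forall>x\<in>cdom. \<forall>y\<in>cdom. R x y \<or> R y x) \<and>
     (\<forall>x\<in>cdom. closedin (top_of_set cdom) {y\<in>cdom. R y x} \<and>
                closedin (top_of_set cdom) {y\<in>cdom. R x y})"

definition peak_set :: "pref \<Rightarrow> ereal set" where
  "peak_set R = {x\<in>cdom. \<forall>y\<in>cdom. R x y}"

definition peak :: "pref \<Rightarrow> ereal" where
  "peak R = the_elem (peak_set R)"

definition single_peaked :: "pref \<Rightarrow> bool" where
  "single_peaked R \<longleftrightarrow> is_pref R \<and> (\<exists>p. peak_set R = {p}) \<and>
     (\<forall>x x' :: real. 0 \<le> x \<and> 0 \<le> x' \<and>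
        ((x' < x \<and> ereal x \<le> peak R) \<or> (peak R \<le> ereal x \<and> x < x'))
        \<longrightarrow> strict R (ereal x) (ereal x'))"

text \<open>Agents are the elements of a finite type 'a; n = CARD('a).\<close>
definition economy :: "('a \<Rightarrow> pref) \<Rightarrow> real \<Rightarrow> bool" where
  "economy R \<Omega> \<longleftrightarrow> (\<forall>i. single_peaked (R i)) \<and> \<Omega> > 0"

definition is_rule :: "(('a::finite \<Rightarrow> pref) \<Rightarrow> real \<Rightarrow> 'a \<Rightarrow> real) \<Rightarrow> bool" where
  "is_rule \<phi> \<longleftrightarrow> (\<forall>R \<Omega>. economy R \<Omega> \<longrightarrow>
      (\<forall>i. 0 \<le> \<phi> R \<Omega> i) \<and> (\<Sum>j\<in>UNIV. \<phi> R \<Omega> j) = \<Omega>)"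

definition own_peak_only :: "(('a::finite \<Rightarrow> pref) \<Rightarrow> real \<Rightarrow> 'a \<Rightarrow> real) \<Rightarrow> bool" where
  "own_peak_only \<phi> \<longleftrightarrow> (\<forall>R \<Omega> i R'. economy R \<Omega> \<and> single_peaked R' \<and> peak R' = peak (R i)
      \<longrightarrow> \<phi> R \<Omega> i = \<phi> (R(i := R')) \<Omega> i)"

definition envy_free :: "(('a::finite \<Rightarrow> pref) \<Rightarrow> real \<Rightarrow> 'a \<Rightarrow> real) \<Rightarrow> bool" where
  "envy_free \<phi> \<longleftrightarrow> (\<forall>R \<Omega> i j. economy R \<Omega> \<and> i \<noteq> j
      \<longrightarrow> R i (ereal (\<phi> R \<Omega> i)) (ereal (\<phi> R \<Omega> j)))"

definition ed_lower_bound :: "(('a::finite \<Rightarrow> pref) \<Rightarrow> real \<Rightarrow> 'a \<Rightarrow> real) \<Rightarrow> bool" where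
  "ed_lower_bound \<phi> \<longleftrightarrow> (\<forall>R \<Omega> i. economy R \<Omega>
      \<longrightarrow> R i (ereal (\<phi> R \<Omega> i)) (ereal (\<Omega> / real CARD('a))))"

definition ed_guarantee :: "(('a::finite \<Rightarrow> pref) \<Rightarrow> real \<Rightarrow> 'a \<Rightarrow> real) \<Rightarrow> bool" where
  "ed_guarantee \<phi> \<longleftrightarrow> (\<forall>R \<Omega> i. economy R \<Omega> \<and> peak (R i) = ereal (\<Omega> / real CARD('a))
      \<longrightarrow> indiff (R i) (ereal (\<phi> R \<Omega> i)) (ereal (\<Omega> / real CARD('a))))"

end

theory Submission
  imports Defs
begin

text \<open>With the equal division lower bound, agent \<open>i\<close> weakly prefers its share to \<open>\<Omega>/n\<close>, its
  peak, so the share is the peak. With envy-freeness, suppose \<open>i\<close>'s share \<open>a\<close> differs from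
  \<open>p = \<Omega>/n\<close>. As the shares sum to \<open>n p\<close>, some other agent receives a share on the other side
  of \<open>p\<close>, and by own-peak-only this persists when \<open>R\<^sub>i\<close> is replaced by the piecewise linear
  utility \<open>min (c (x - p)) (p - x)\<close> peaked at \<open>p\<close>. Taking the slope \<open>c\<close> steep (if \<open>a < p\<close>)
  or flat (if \<open>a > p\<close>) makes every feasible share on the other side strictly better than \<open>a\<close>,
  so \<open>i\<close> envies that agent.\<close>

definition utility_pref :: "(ereal \<Rightarrow> ereal) \<Rightarrow> pref" where
  "utility_pref u = (\<lambda>x y. u y \<le> u x)"

lemma strict_utility_pref [simp]: "strict (utility_pref u) x y \<longleftrightarrow> u y < u x"
  by (auto simp: strict_def utility_pref_def)

lemma is_pref_utility_pref:
  assumes "continuous_on cdom u"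
  shows "is_pref (utility_pref u)"
proof -
  have "closedin (top_of_set cdom) {y \<in> cdom. utility_pref u y x}"
    and "closedin (top_of_set cdom) {y \<in> cdom. utility_pref u x y}" for x
    using continuous_closedin_preimage[OF assms closed_atLeast[of "u x"]]
      continuous_closedin_preimage[OF assms closed_atMost[of "u x"]]
    by (simp_all add: utility_pref_def vimage_def Int_def conj_commute)
  then show ?thesis
    unfolding is_pref_def by (auto simp: utility_pref_def)
qed

definition tent :: "real \<Rightarrow> real \<Rightarrow> ereal \<Rightarrow> ereal" where
  "tent c p x = min (ereal c * (x - ereal p)) (ereal p - x)"

lemma continuous_on_tent: "continuous_on A (tent c p)"
  unfolding tent_def continuous_on_def
  by (intro ballI tendsto_min tendsto_cmult_ereal tendsto_diff_ereal_general
      tendsto_ident_at tendsto_const) auto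

lemma tent_below_peak:
  assumes "0 \<le> c" "x \<le> p"
  shows "tent c p (ereal x) = ereal (c * (x - p))"
proof -
  have "c * (x - p) \<le> p - x"
    using assms mult_nonneg_nonpos[of c "x - p"] by simp
  then show ?thesis
    by (simp add: tent_def min_def)
qed

lemma tent_above_peak:
  assumes "0 \<le> c" "p \<le> x"
  shows "tent c p (ereal x) = ereal (p - x)"
proof -
  have "p - x \<le> 0" "0 \<le> c * (x - p)"
    using assms by simp_all
  then show ?thesis
    by (simp add: tent_def min_def)
qed

lemma tent_less_peak:
  assumes "0 < c" "x \<noteq> ereal p"
  shows "tent c p x < tent c p (ereal p)"
proof (cases x)
  case (real r)
  with assms show ?thesis
    by (cases "r \<le> p") (auto simp: tent_below_peak tent_above_peak mult_pos_neg)
qed (use assms in \<open>auto simp: tent_def\<close>)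

lemma single_peaked_tent:
  assumes "0 < c" "0 \<le> p"
  shows "single_peaked (utility_pref (tent c p))" and "peak (utility_pref (tent c p)) = ereal p"
proof -
  have "ereal p \<in> cdom"
    using assms(2) by (simp add: cdom_def)
  then have "x = ereal p" if "\<forall>y\<in>cdom. tent c p y \<le> tent c p x" for x
    using that tent_less_peak[OF assms(1), of x p] by (meson not_le)
  moreover have "tent c p y \<le> tent c p (ereal p)" for y
    using tent_less_peak[OF assms(1), of y p] by (cases "y = ereal p") auto
  ultimately have peak_set: "peak_set (utility_pref (tent c p)) = {ereal p}"
    using assms(2) unfolding peak_set_def utility_pref_def cdom_def by auto
  then show peak: "peak (utility_pref (tent c p)) = ereal p"
    by (simp add: peak_def)
  show "single_peaked (utility_pref (tent c p))"
    unfolding single_peaked_def peak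
    using peak_set is_pref_utility_pref[OF continuous_on_tent] assms(1)
    by (auto simp: tent_below_peak tent_above_peak)
qed

lemma tent_steep_left_slope:
  assumes "a < p" "p \<le> \<Omega>"
  obtains c where "0 < c" "\<And>y. p \<le> y \<Longrightarrow> y \<le> \<Omega> \<Longrightarrow> tent c p (ereal a) < tent c p (ereal y)"
proof
  define c where "c = (\<Omega> - a) / (p - a)"
  show "0 < c"
    using assms by (simp add: c_def)
  have "c * (a - p) = a - \<Omega>"
    using assms(1) by (simp add: c_def field_simps)
  then show "tent c p (ereal a) < tent c p (ereal y)" if "p \<le> y" "y \<le> \<Omega>" for y
    using that assms \<open>0 < c\<close> by (simp add: tent_below_peak tent_above_peak)
qed

lemma tent_flat_left_slope:
  assumes "0 < p" "p < a"
  obtains c where "0 < c" "\<And>y. 0 \<le> y \<Longrightarrow> y \<le> p \<Longrightarrow> tent c p (ereal a) < tent c p (ereal y)"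
proof
  define c where "c = (a - p) / (2 * p)"
  show "0 < c"
    using assms by (simp add: c_def)
  have "c * p = (a - p) / 2"
    using assms(1) by (simp add: c_def)
  show "tent c p (ereal a) < tent c p (ereal y)" if "0 \<le> y" "y \<le> p" for y
  proof -
    have "0 \<le> c * y"
      using that \<open>0 < c\<close> by simp
    then have "p - a < c * (y - p)"
      using \<open>c * p = (a - p) / 2\<close> assms(2) by (simp add: right_diff_distrib)
    then show ?thesis
      using that assms \<open>0 < c\<close> by (simp add: tent_below_peak tent_above_peak)
  qed
qed

lemma exists_above_mean:
  fixes f :: "'b \<Rightarrow> 'c::linordered_semidom"
  assumes "finite A" "i \<in> A" "sum f A = of_nat (card A) * m" "f i < m"
  shows "\<exists>j\<in>A - {i}. m < f j"
proof (rule ccontr)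
  assume "\<not> ?thesis"
  then have "sum f A < sum (\<lambda>_. m) A"
    using assms by (intro sum_strict_mono_ex1) (auto simp: not_less)
  then show False
    using assms(3) by simp
qed

lemma exists_below_mean:
  fixes f :: "'b \<Rightarrow> 'c::linordered_idom"
  assumes "finite A" "i \<in> A" "sum f A = of_nat (card A) * m" "m < f i"
  shows "\<exists>j\<in>A - {i}. f j < m"
  using exists_above_mean[of A i "\<lambda>j. - f j" "- m"] assms by (simp add: sum_negf)

lemma single_peaked_eq_peakI:
  assumes "single_peaked R" "x \<in> cdom" "R x (peak R)"
  shows "x = peak R"
proof -
  obtain q where q: "peak_set R = {q}"
    using assms(1) unfolding single_peaked_def by blast
  then have "peak R = q" "q \<in> cdom" "\<forall>y\<in>cdom. R q y"
    unfolding peak_def peak_set_def by auto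
  moreover have "is_pref R"
    using assms(1) unfolding single_peaked_def by blast
  ultimately have "x \<in> peak_set R"
    using assms(2,3) unfolding is_pref_def peak_set_def by blast
  then show ?thesis
    using q \<open>peak R = q\<close> by simp
qed

lemma rule_share_bounds:
  assumes "is_rule \<phi>" "economy R \<Omega>"
  shows "0 \<le> \<phi> R \<Omega> j" and "\<phi> R \<Omega> j \<le> \<Omega>"
proof -
  have nonneg: "\<forall>k. 0 \<le> \<phi> R \<Omega> k" and total: "(\<Sum>k\<in>UNIV. \<phi> R \<Omega> k) = \<Omega>"
    using assms unfolding is_rule_def by auto
  show "0 \<le> \<phi> R \<Omega> j"
    using nonneg by blast
  show "\<phi> R \<Omega> j \<le> \<Omega>"
    using member_le_sum[of j UNIV "\<phi> R \<Omega>"] nonneg total by simp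
qed

lemma ed_lower_bound_imp_equal_division_share:
  fixes \<phi> :: "('a::finite \<Rightarrow> pref) \<Rightarrow> real \<Rightarrow> 'a \<Rightarrow> real"
  assumes "is_rule \<phi>" "ed_lower_bound \<phi>" "economy R \<Omega>"
    and "peak (R i) = ereal (\<Omega> / real CARD('a))"
  shows "\<phi> R \<Omega> i = \<Omega> / real CARD('a)"
proof -
  have "R i (ereal (\<phi> R \<Omega> i)) (peak (R i))"
    using assms(2-4) unfolding ed_lower_bound_def by auto
  moreover have "single_peaked (R i)"
    using assms(3) by (simp add: economy_def)
  ultimately have "ereal (\<phi> R \<Omega> i) = peak (R i)"
    using single_peaked_eq_peakI rule_share_bounds(1)[OF assms(1,3)] by (simp add: cdom_def)
  then show ?thesis
    using assms(4) by simp
qed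

lemma envy_free_tent_replacement:
  fixes \<phi> :: "('a::finite \<Rightarrow> pref) \<Rightarrow> real \<Rightarrow> 'a \<Rightarrow> real"
  assumes "own_peak_only \<phi>" "envy_free \<phi>" "economy R \<Omega>"
    and "peak (R i) = ereal p" "0 \<le> p" "0 < c"
  defines "R' \<equiv> R(i := utility_pref (tent c p))"
  shows "economy R' \<Omega>" and "\<phi> R' \<Omega> i = \<phi> R \<Omega> i"
    and "\<And>j. j \<noteq> i \<Longrightarrow> tent c p (ereal (\<phi> R' \<Omega> j)) \<le> tent c p (ereal (\<phi> R \<Omega> i))"
proof -
  note tent = single_peaked_tent[OF assms(6,5)]
  show economy: "economy R' \<Omega>"
    using assms(3) tent(1) unfolding R'_def economy_def by simp
  show same: "\<phi> R' \<Omega> i = \<phi> R \<Omega> i"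
    using assms(1,3,4) tent unfolding own_peak_only_def R'_def by simp
  fix j
  assume "j \<noteq> i"
  then have "R' i (ereal (\<phi> R' \<Omega> i)) (ereal (\<phi> R' \<Omega> j))"
    using assms(2) economy unfolding envy_free_def by metis
  then show "tent c p (ereal (\<phi> R' \<Omega> j)) \<le> tent c p (ereal (\<phi> R \<Omega> i))"
    using same by (simp add: R'_def utility_pref_def)
qed

lemma envy_free_imp_equal_division_share:
  fixes \<phi> :: "('a::finite \<Rightarrow> pref) \<Rightarrow> real \<Rightarrow> 'a \<Rightarrow> real"
  assumes "is_rule \<phi>" "own_peak_only \<phi>" "envy_free \<phi>" "economy R \<Omega>"
    and "peak (R i) = ereal (\<Omega> / real CARD('a))"
  shows "\<phi> R \<Omega> i = \<Omega> / real CARD('a)"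
proof -
  define p where "p = \<Omega> / real CARD('a)"
  define a where "a = \<phi> R \<Omega> i"
  have "0 < \<Omega>"
    using assms(4) by (simp add: economy_def)
  then have "0 < p" "p \<le> \<Omega>"
    by (simp_all add: p_def divide_le_eq)
  have mean: "\<Omega> = of_nat (card (UNIV :: 'a set)) * p"
    by (simp add: p_def)
  let ?R' = "\<lambda>c. R(i := utility_pref (tent c p))"
  note replacement = envy_free_tent_replacement[OF assms(2-4) assms(5)[folded p_def]
      less_imp_le[OF \<open>0 < p\<close>]]
  have shares: "sum (\<phi> (?R' c) \<Omega>) UNIV = of_nat (card (UNIV :: 'a set)) * p"
    "\<phi> (?R' c) \<Omega> i = a" "\<And>j. \<phi> (?R' c) \<Omega> j \<in> {0..\<Omega>}" if "0 < c" for c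
    using replacement[OF that] rule_share_bounds[OF assms(1)] assms(1) mean
    unfolding a_def is_rule_def by auto
  have "\<not> a < p"
  proof
    assume "a < p"
    obtain c where c: "0 < c"
      "\<And>y. p \<le> y \<Longrightarrow> y \<le> \<Omega> \<Longrightarrow> tent c p (ereal a) < tent c p (ereal y)"
      using tent_steep_left_slope[OF \<open>a < p\<close> \<open>p \<le> \<Omega>\<close>] by blast
    obtain j where "j \<noteq> i" "p < \<phi> (?R' c) \<Omega> j"
      using exists_above_mean[of UNIV i "\<phi> (?R' c) \<Omega>" p] shares[OF c(1)] \<open>a < p\<close> by auto
    then show False
      using c(2)[of "\<phi> (?R' c) \<Omega> j"] shares(3)[OF c(1)] replacement(3)[OF c(1) \<open>j \<noteq> i\<close>]
      by (simp add: a_def not_less)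
  qed
  moreover have "\<not> p < a"
  proof
    assume "p < a"
    obtain c where c: "0 < c"
      "\<And>y. 0 \<le> y \<Longrightarrow> y \<le> p \<Longrightarrow> tent c p (ereal a) < tent c p (ereal y)"
      using tent_flat_left_slope[OF \<open>0 < p\<close> \<open>p < a\<close>] by blast
    obtain j where "j \<noteq> i" "\<phi> (?R' c) \<Omega> j < p"
      using exists_below_mean[of UNIV i "\<phi> (?R' c) \<Omega>" p] shares[OF c(1)] \<open>p < a\<close> by auto
    then show False
      using c(2)[of "\<phi> (?R' c) \<Omega> j"] shares(3)[OF c(1)] replacement(3)[OF c(1) \<open>j \<noteq> i\<close>]
      by (simp add: a_def not_less)
  qed
  ultimately show ?thesis
    by (simp add: a_def p_def)
qed

theorem lemma5:
  fixes \<phi> :: "('a::finite \<Rightarrow> pref) \<Rightarrow> real \<Rightarrow> 'a \<Rightarrow> real"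
  assumes "is_rule \<phi>"
    and "own_peak_only \<phi>"
    and "envy_free \<phi> \<or> ed_lower_bound \<phi>"
  shows "ed_guarantee \<phi>"
  unfolding ed_guarantee_def
proof (intro allI impI, elim conjE)
  fix R :: "'a \<Rightarrow> pref" and \<Omega> i
  assume economy: "economy R \<Omega>" and peak: "peak (R i) = ereal (\<Omega> / real CARD('a))"
  have "\<phi> R \<Omega> i = \<Omega> / real CARD('a)"
    using assms(3) envy_free_imp_equal_division_share[OF assms(1,2) _ economy peak]
      ed_lower_bound_imp_equal_division_share[OF assms(1) _ economy peak]
    by blast
  moreover have "ereal (\<Omega> / real CARD('a)) \<in> cdom"
    using economy by (simp add: economy_def cdom_def)
  moreover have "is_pref (R i)"
    using economy by (simp add: economy_def single_peaked_def)
  ultimately show "indiff (R i) (ereal (\<phi> R \<Omega> i)) (ereal (\<Omega> / real CARD('a)))"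
    unfolding indiff_def is_pref_def by simp
qed

end
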